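(* Let $A$ be a random variable with $\mathbb P(A>0)=1$ and law $\rho$, and let $\mu$ be a solution of equation (2) for $\rho$. Then: (a) $\int_0^\infty e^{sx}\mu(dx)<\infty$ for some $s>0$ if and only if $\operatorname{ess\,sup}\rho\le1$, i.e. $\mathbb P(A\le1)=1$; (b) if $\operatorname{ess\,sup}\rho<1$ (i.e. $\mathbb P(A\le c)=1$ for some $c<1$), then $\int_0^\infty e^{sx}\mu(dx)<\infty$ for every $s\in\mathbb R$, so the characteristic function of $\mu$ extends to an entire function.
   Context: For a probability measure $\nu$ on $[0,\infty)$ with mean $m\in(0,\infty)$, its size-biased distribution is $\nu_{sb}(dx)=m^{-1}x\,\nu(dx)$. A probability measure $\mu$ on $[0,\infty)$ with mean in $(0,\infty)$ is a solution of equation (2) for $\rho$ if $\eta_{sb}\overset{d}{=}A\eta_{sb}+\eta$, where $\eta\sim\mu$, $\eta_{sb}\sim\mu_{sb}$ and $A\sim\rho$ are mutually independent. $\operatorname{ess\,sup}\rho=\inf\{c:\rho((c,\infty))=0\}$. *)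

theory Defs
  imports "HOL-Probability.Probability"
begin

definition mean :: "real measure \<Rightarrow> real" where
  "mean M = (\<integral>x. x \<partial>M)"

definition size_biased :: "real measure \<Rightarrow> real measure" where
  "size_biased M = density M (\<lambda>x. ennreal (x / mean M))"

text \<open>A probability measure mu on [0,infinity) with mean in (0,infinity) solves equation (2)
  for rho if  eta_sb =d A * eta_sb + eta  with eta ~ mu, eta_sb ~ mu_sb, A ~ rho independent.\<close>
definition solves_eq2 :: "real measure \<Rightarrow> real measure \<Rightarrow> bool" where
  "solves_eq2 \<rho> \<mu> \<longleftrightarrow>
     prob_space \<mu> \<and> sets \<mu> = sets borel \<and> \<mu> {x. x < 0} = 0 \<and>
     integrable \<mu> (\<lambda>x. x) \<and> 0 < mean \<mu> \<and>
     distr (\<rho> \<Otimes>\<^sub>M (size_biased \<mu> \<Otimes>\<^sub>M \<mu>)) borel (\<lambda>(a, x, y). a * x + y)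
       = size_biased \<mu>"

end

theory Submission
  imports Defs
begin

text \<open>
  Write L(s) = E e^{s \<eta>} and L_sb(s) = E e^{s \<eta>_sb}. Equation (2) factorises as
  L_sb(s) = E[L_sb(s A)] L(s), and size biasing gives L_sb = L' / m, so L(s) \<ge> 1 + m s.

  If P(A > c) = p > 0 for some c > 1, then L_sb(s) \<ge> p (1 + m s) L_sb(c s) \<ge> p (1 + m s) L_sb(s):
  finiteness of L_sb at one s > 0 propagates along the points c^n s and forces
  p (1 + m c^n s) \<le> 1 for all n, which is absurd.

  Conversely let A \<le> 1. A cannot be 1 almost surely (that would force \<eta> = 0), so
  q = P(A \<le> c) > 0 for some c < 1. For the truncated transform F(t) = E e^{min (t \<eta>_sb) K} the
  equation yields F(t) - F(c t) \<le> (m / q) t F(t)^2, and F(c^n t) \<rightarrow> 1. Walking up a geometric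
  grid of t, these keep F \<le> 2 on (0, (1 - c) q / (18 m)] uniformly in K.

  If A \<le> c < 1, then E[L_sb(s A)] \<le> L_sb(c s), and the Gronwall argument for L' = m L_sb \<le>
  m L_sb(c s) L (run discretely on E[e^{t \<eta>}; \<eta> \<le> K]) carries finiteness of L from [0, s)
  to [0, s / c). Once all exponential moments are finite, the characteristic function is the
  sum of an everywhere convergent power series.
\<close>

section \<open>Exponential moments of nonnegative distributions\<close>

definition mgf :: "real measure \<Rightarrow> real \<Rightarrow> ennreal" where
  "mgf M s = (\<integral>\<^sup>+x. ennreal (exp (s * x)) \<partial>M)"

text \<open>Two finite truncations of mgf: the estimates below are proved for them
  uniformly in K and pass to mgf by monotone convergence.\<close>

definition mgf_trunc :: "real measure \<Rightarrow> real \<Rightarrow> real \<Rightarrow> ennreal" where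
  "mgf_trunc M K s = (\<integral>\<^sup>+x. ennreal (exp (min (s * x) K)) \<partial>M)"

definition mgf_cut :: "real measure \<Rightarrow> real \<Rightarrow> real \<Rightarrow> ennreal" where
  "mgf_cut M K s = (\<integral>\<^sup>+x. ennreal (exp (s * x)) * indicator {..K} x \<partial>M)"

locale nonneg_real_distribution = real_distribution +
  assumes AE_nonneg: "AE x in M. 0 \<le> x"
begin

lemma emeasure_UNIV: "emeasure M UNIV = 1"
  using emeasure_space_1 by simp

lemma mgf_mono:
  assumes "s \<le> t"
  shows "mgf M s \<le> mgf M t"
  unfolding mgf_def using AE_nonneg
  by (intro nn_integral_mono_AE, eventually_elim) (use assms in \<open>auto intro: mult_right_mono\<close>)

lemma mgf_le_1:
  assumes "s \<le> 0"
  shows "mgf M s \<le> 1"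
proof -
  have "mgf M s \<le> (\<integral>\<^sup>+x. 1 \<partial>M)" unfolding mgf_def using AE_nonneg
    by (intro nn_integral_mono_AE, eventually_elim) (use assms in \<open>auto simp: mult_nonpos_nonneg\<close>)
  then show ?thesis by (simp add: emeasure_UNIV)
qed

lemma one_le_mgf:
  assumes "0 \<le> s"
  shows "1 \<le> mgf M s"
proof -
  have "(\<integral>\<^sup>+x. 1 \<partial>M) \<le> mgf M s" unfolding mgf_def using AE_nonneg
    by (intro nn_integral_mono_AE, eventually_elim) (use assms in auto)
  then show ?thesis by (simp add: emeasure_UNIV)
qed

lemma mgf_pos: "0 < mgf M s"
proof -
  have "mgf M s \<noteq> 0"
  proof
    assume "mgf M s = 0"
    then have "AE x in M. ennreal (exp (s * x)) = 0"
      unfolding mgf_def by (subst (asm) nn_integral_0_iff_AE) auto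
    then show False using AE_False by simp
  qed
  then show ?thesis by (simp add: zero_less_iff_neq_zero)
qed

lemma mgf_trunc_mono:
  assumes "s \<le> t"
  shows "mgf_trunc M K s \<le> mgf_trunc M K t"
  unfolding mgf_trunc_def using AE_nonneg
proof (intro nn_integral_mono_AE, eventually_elim)
  case (elim x)
  then have "s * x \<le> t * x" using assms by (intro mult_right_mono)
  then show ?case by simp
qed

lemma mgf_trunc_le_exp: "mgf_trunc M K s \<le> ennreal (exp K)"
proof -
  have "mgf_trunc M K s \<le> (\<integral>\<^sup>+x. ennreal (exp K) \<partial>M)" unfolding mgf_trunc_def
    by (intro nn_integral_mono) auto
  then show ?thesis by (simp add: emeasure_UNIV)
qed

lemma mgf_trunc_neq_top: "mgf_trunc M K s \<noteq> \<top>"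
  using neq_top_trans[OF ennreal_neq_top mgf_trunc_le_exp] .

lemma mgf_trunc_jump:
  assumes "0 < t" "t \<le> t'" "0 \<le> K"
  shows "mgf_trunc M K t' \<le> ennreal (exp ((t'/t - 1) * K)) * mgf_trunc M K t"
proof -
  have d: "t'/t - 1 \<ge> 0" using assms by (simp add: field_simps)
  have "mgf_trunc M K t' \<le> (\<integral>\<^sup>+x. ennreal (exp ((t'/t - 1) * K)) * ennreal (exp (min (t * x) K)) \<partial>M)"
    unfolding mgf_trunc_def using AE_nonneg
  proof (intro nn_integral_mono_AE, eventually_elim)
    case (elim x)
    have "min (t' * x) K \<le> min (t * x) K + (t'/t - 1) * K"
    proof (cases "t * x \<le> K")
      case True
      have "t' * x = t * x + (t'/t - 1) * (t * x)" using assms by (simp add: field_simps)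
      also have "(t'/t - 1) * (t * x) \<le> (t'/t - 1) * K" using True d by (intro mult_left_mono)
      finally show ?thesis using True by simp
    next
      case False
      have "0 \<le> (t'/t - 1) * K" using d assms by simp
      then show ?thesis using False by simp
    qed
    then have "exp (min (t' * x) K) \<le> exp ((t'/t - 1) * K) * exp (min (t * x) K)"
      by (simp add: exp_add[symmetric] add.commute)
    then show ?case by (simp add: ennreal_mult[symmetric] ennreal_leI)
  qed
  also have "\<dots> = ennreal (exp ((t'/t - 1) * K)) * mgf_trunc M K t"
    unfolding mgf_trunc_def by (rule nn_integral_cmult) simp
  finally show ?thesis .
qed

lemma mgf_trunc_dilation_le:
  assumes "0 < u" "u \<le> s" "s \<le> (1 + ln (3/2) / (K + 1)) * u" "0 \<le> K"
  shows "mgf_trunc M K s \<le> ennreal (3/2) * mgf_trunc M K u"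
proof -
  have "(s / u - 1) * K \<le> ln (3/2) / (K + 1) * K"
    using assms by (intro mult_right_mono) (auto simp: field_simps)
  also have "\<dots> \<le> ln (3/2)"
    using assms by (simp add: field_simps mult_left_le)
  finally have "exp ((s / u - 1) * K) \<le> 3/2"
    by (metis exp_le_cancel_iff exp_ln zero_less_divide_iff zero_less_numeral)
  then have "ennreal (exp ((s / u - 1) * K)) * mgf_trunc M K u \<le> ennreal (3/2) * mgf_trunc M K u"
    by (intro mult_right_mono ennreal_leI) auto
  with mgf_trunc_jump[OF assms(1,2,4)] show ?thesis by (rule order_trans)
qed

lemma INF_mgf_trunc_geometric:
  assumes "0 < c" "c < 1" "0 \<le> K" "0 \<le> t"
  shows "(INF n. mgf_trunc M K (c^n * t)) = 1"
proof -
  define f where "f n = (\<lambda>x. ennreal (exp (min ((c^n * t) * x) K)))" for n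
  have dec: "f (Suc n) x \<le> f n x" if "0 \<le> x" for n x
  proof -
    have "c^Suc n * (t * x) \<le> c^n * (t * x)" using assms that
      by (intro mult_right_mono) (auto simp: power_decreasing)
    then show ?thesis by (simp add: f_def mult_ac)
  qed
  have "(INF n. mgf_trunc M K (c^n * t)) = (INF n. integral\<^sup>N M (f n))"
    unfolding mgf_trunc_def f_def ..
  also have "\<dots> = (\<integral>\<^sup>+x. (INF n. f n x) \<partial>M)"
  proof (rule nn_integral_monotone_convergence_INF_AE'[symmetric])
    show "AE x in M. f (Suc n) x \<le> f n x" for n using AE_nonneg by eventually_elim (rule dec)
    show "f n \<in> borel_measurable M" for n unfolding f_def by measurable
    have "integral\<^sup>N M (f 0) \<le> ennreal (exp K)"
      using mgf_trunc_le_exp[of K t] by (simp add: mgf_trunc_def f_def)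
    then show "integral\<^sup>N M (f 0) < \<infinity>" by (simp add: le_less_trans)
  qed
  also have "\<dots> = (\<integral>\<^sup>+x. 1 \<partial>M)"
    using AE_nonneg
  proof (intro nn_integral_cong_AE, eventually_elim)
    case (elim x)
    have "(\<lambda>n. f n x) \<longlonglongrightarrow> ennreal (exp (min ((0 * t) * x) K))"
      unfolding f_def by (intro tendsto_intros tendsto_ennrealI) (use assms in simp)
    then have "(\<lambda>n. f n x) \<longlonglongrightarrow> 1" using assms by simp
    moreover have "decseq (\<lambda>n. f n x)" using elim by (intro decseq_SucI dec)
    ultimately show ?case using LIMSEQ_INF LIMSEQ_unique by blast
  qed
  finally show ?thesis by (simp add: emeasure_UNIV)
qed

lemma mgf_eq_SUP_mgf_trunc: "mgf M s = (SUP N. mgf_trunc M (real N) s)"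
proof -
  have "mgf M s = (\<integral>\<^sup>+x. (SUP N. ennreal (exp (min (s * x) (real N)))) \<partial>M)"
    unfolding mgf_def
  proof (intro nn_integral_cong antisym)
    fix x
    obtain N where "s * x \<le> real N" using real_arch_simple by blast
    then show "ennreal (exp (s * x)) \<le> (SUP N. ennreal (exp (min (s * x) (real N))))"
      by (intro SUP_upper2[of N]) auto
  qed (auto intro: SUP_least)
  also have "\<dots> = (SUP N. mgf_trunc M (real N) s)" unfolding mgf_trunc_def
    by (rule nn_integral_monotone_convergence_SUP) (auto intro!: incseq_SucI le_funI)
  finally show ?thesis .
qed

lemma mgf_cut_0_le_1: "mgf_cut M K 0 \<le> 1"
proof -
  have "mgf_cut M K 0 \<le> (\<integral>\<^sup>+x. 1 \<partial>M)" unfolding mgf_cut_def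
    by (intro nn_integral_mono) (auto simp: indicator_def)
  then show ?thesis by (simp add: emeasure_UNIV)
qed

lemma mgf_eq_SUP_mgf_cut: "mgf M s = (SUP N. mgf_cut M (real (Suc N)) s)"
proof -
  have "mgf M s = (\<integral>\<^sup>+x. (SUP N. ennreal (exp (s * x)) * indicator {..real (Suc N)} x) \<partial>M)"
    unfolding mgf_def
  proof (intro nn_integral_cong antisym)
    fix x :: real
    obtain N where "x \<le> real N" using real_arch_simple by blast
    then show "ennreal (exp (s * x)) \<le> (SUP N. ennreal (exp (s * x)) * indicator {..real (Suc N)} x)"
      by (intro SUP_upper2[of N]) auto
  qed (auto intro: SUP_least simp: indicator_def)
  also have "\<dots> = (SUP N. mgf_cut M (real (Suc N)) s)" unfolding mgf_cut_def
    by (rule nn_integral_monotone_convergence_SUP)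
      (auto intro!: incseq_SucI le_funI simp: indicator_def)
  finally show ?thesis .
qed

end

section \<open>The characteristic function of a distribution with all exponential moments\<close>

definition char_coeff :: "real measure \<Rightarrow> nat \<Rightarrow> complex" where
  "char_coeff M n = complex_of_real ((\<integral>x. x^n \<partial>M) / fact n) * \<i>^n"

context real_distribution
begin

lemma
  assumes mgf_finite: "\<And>s. mgf M s < \<infinity>" and "0 \<le> r"
  shows integrable_abs_power_fact: "integrable M (\<lambda>x. (r * \<bar>x\<bar>)^n / fact n)"
    and summable_integral_abs_power_fact: "summable (\<lambda>n. \<integral>x. (r * \<bar>x\<bar>)^n / fact n \<partial>M)"
proof -
  define B where "B n = (\<integral>\<^sup>+x. ennreal ((r * \<bar>x\<bar>)^n / fact n) \<partial>M)" for n
  have "(\<Sum>n. B n) = (\<integral>\<^sup>+x. (\<Sum>n. ennreal ((r * \<bar>x\<bar>)^n / fact n)) \<partial>M)"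
    unfolding B_def by (rule nn_integral_suminf[symmetric]) measurable
  also have "\<dots> = (\<integral>\<^sup>+x. ennreal (exp (r * \<bar>x\<bar>)) \<partial>M)"
  proof (intro nn_integral_cong)
    fix x
    have "(\<lambda>n. (r * \<bar>x\<bar>)^n / fact n) sums exp (r * \<bar>x\<bar>)"
      using exp_converges[of "r * \<bar>x\<bar>"] by (simp add: divide_inverse mult.commute)
    then show "(\<Sum>n. ennreal ((r * \<bar>x\<bar>)^n / fact n)) = ennreal (exp (r * \<bar>x\<bar>))"
      using \<open>0 \<le> r\<close> by (subst suminf_ennreal2) (auto simp: sums_iff)
  qed
  also have "\<dots> \<le> (\<integral>\<^sup>+x. ennreal (exp (r * x)) + ennreal (exp ((-r) * x)) \<partial>M)"
    by (intro nn_integral_mono) (auto simp: abs_if ennreal_plus[symmetric] simp del: ennreal_plus)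
  also have "\<dots> = mgf M r + mgf M (-r)"
    unfolding mgf_def by (rule nn_integral_add) auto
  also have "\<dots> < \<infinity>" using mgf_finite by simp
  finally have sum_B: "(\<Sum>n. B n) < \<infinity>" .
  show int: "integrable M (\<lambda>x. (r * \<bar>x\<bar>)^n / fact n)" for n
    using ennreal_suminf_lessD[OF sum_B, of n] \<open>0 \<le> r\<close> by (intro integrableI_bounded) (auto simp: B_def)
  have "ennreal (\<integral>x. (r * \<bar>x\<bar>)^n / fact n \<partial>M) = B n" for n
    unfolding B_def using \<open>0 \<le> r\<close> by (subst nn_integral_eq_integral[OF int]) auto
  then show "summable (\<lambda>n. \<integral>x. (r * \<bar>x\<bar>)^n / fact n \<partial>M)"
    using sum_B \<open>0 \<le> r\<close> by (intro summable_suminf_not_top) auto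
qed

lemma summable_char_coeff:
  assumes "\<And>s. mgf M s < \<infinity>"
  shows "summable (\<lambda>n. char_coeff M n * z^n)"
proof (rule summable_norm_cancel, rule summable_comparison_test')
  show "summable (\<lambda>n. \<integral>x. (cmod z * \<bar>x\<bar>)^n / fact n \<partial>M)"
    by (rule summable_integral_abs_power_fact[OF assms]) simp
  fix n :: nat
  have "norm (char_coeff M n * z^n) = \<bar>\<integral>x. x^n \<partial>M\<bar> / fact n * cmod z ^ n"
    by (simp add: char_coeff_def norm_mult norm_power norm_divide)
  also have "\<dots> \<le> (\<integral>x. \<bar>x\<bar>^n \<partial>M) / fact n * cmod z ^ n"
    using integral_abs_bound[of M "\<lambda>x. x^n"]
    by (intro mult_right_mono divide_right_mono) (auto simp: power_abs)
  also have "\<dots> = (\<integral>x. (cmod z * \<bar>x\<bar>)^n / fact n \<partial>M)"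
    by (simp add: power_mult_distrib mult_ac)
  finally show "norm (norm (char_coeff M n * z^n)) \<le> (\<integral>x. (cmod z * \<bar>x\<bar>)^n / fact n \<partial>M)"
    by simp
qed

lemma char_eq_suminf_char_coeff:
  assumes mgf_finite: "\<And>s. mgf M s < \<infinity>"
  shows "char M t = (\<Sum>n. char_coeff M n * complex_of_real t ^ n)"
proof -
  define f where "f n x = complex_of_real ((t * x)^n / fact n) * \<i>^n" for n x
  have f_sums: "(\<lambda>n. f n x) sums iexp (t * x)" for x
  proof -
    have "(\<i> * complex_of_real (t * x))^n /\<^sub>R fact n = f n x" for n
      by (simp add: f_def power_mult_distrib scaleR_conv_of_real divide_inverse mult_ac)
    then show ?thesis using exp_converges[of "\<i> * complex_of_real (t * x)"] by simp
  qed
  have norm_f: "norm (f n x) = (\<bar>t\<bar> * \<bar>x\<bar>)^n / fact n" for n x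
    by (simp add: f_def norm_mult norm_power norm_divide abs_mult power_mult_distrib)
  have int_f: "integrable M (f n)" for n
  proof -
    have "integrable M (\<lambda>x. (t * x)^n / fact n)"
      by (rule Bochner_Integration.integrable_bound[OF integrable_abs_power_fact[OF mgf_finite, of "\<bar>t\<bar>" n]])
         (auto simp: abs_mult power_abs power_mult_distrib)
    then show ?thesis unfolding f_def by (intro integrable_mult_left integrable_of_real)
  qed
  have "char M t = (\<integral>x. (\<Sum>n. f n x) \<partial>M)"
    unfolding char_def using f_sums by (simp add: sums_iff)
  also have "\<dots> = (\<Sum>n. integral\<^sup>L M (f n))"
  proof (rule integral_suminf[OF int_f])
    show "AE x in M. summable (\<lambda>n. norm (f n x))"
      unfolding norm_f using summable_exp by (intro AE_I2) (simp add: divide_inverse mult.commute)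
    show "summable (\<lambda>n. \<integral>x. norm (f n x) \<partial>M)"
      unfolding norm_f by (rule summable_integral_abs_power_fact[OF mgf_finite]) simp
  qed
  also have "\<dots> = (\<Sum>n. char_coeff M n * complex_of_real t ^ n)"
  proof (intro suminf_cong)
    fix n
    have "integral\<^sup>L M (f n) = complex_of_real (\<integral>x. (t * x)^n / fact n \<partial>M) * \<i>^n"
      unfolding f_def integral_mult_left_zero integral_complex_of_real ..
    also have "(\<integral>x. (t * x)^n / fact n \<partial>M) = t^n * (\<integral>x. x^n \<partial>M) / fact n"
      by (simp add: power_mult_distrib)
    finally show "integral\<^sup>L M (f n) = char_coeff M n * complex_of_real t ^ n"
      by (simp add: char_coeff_def mult_ac)
  qed
  finally show ?thesis .
qed

theorem char_entire_extension:
  assumes "\<And>s. mgf M s < \<infinity>"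
  shows "\<exists>F. F holomorphic_on UNIV \<and> (\<forall>t::real. F (complex_of_real t) = char M t)"
proof (intro exI conjI allI)
  show "(\<lambda>z. \<Sum>n. char_coeff M n * z^n) holomorphic_on UNIV"
    unfolding holomorphic_on_def field_differentiable_def
    using termdiffs_strong_converges_everywhere[OF summable_char_coeff[OF assms]]
    by (blast intro: has_field_derivative_at_within)
  show "(\<Sum>n. char_coeff M n * complex_of_real t ^ n) = char M t" for t
    using char_eq_suminf_char_coeff[OF assms] by simp
qed

end

section \<open>Real-variable estimates\<close>

lemma quadratic_gap_extend:
  fixes F :: "real \<Rightarrow> real"
  assumes c: "0 < c" "c < 1" and \<beta>: "0 < \<beta>"
    and nonneg: "\<And>t. 0 < t \<Longrightarrow> 0 \<le> F t"
    and gap: "\<And>t. 0 < t \<Longrightarrow> F t - F (c * t) \<le> \<beta> * t * (F t)^2"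
    and s: "0 < s" "s \<le> (1 - c) / (18 * \<beta>)" "c * s \<le> u"
    and below: "\<And>t. 0 < t \<Longrightarrow> t \<le> u \<Longrightarrow> F t \<le> 2"
    and jump: "F s \<le> 3/2 * F u" and "0 < u"
    and small: "F (c^N * s) \<le> 3/2"
  shows "F s \<le> 2"
proof -
  have le_3: "F (c^j * s) \<le> 3" for j
  proof (cases j)
    case 0
    then show ?thesis using jump below[OF \<open>0 < u\<close>] by simp
  next
    case (Suc i)
    have "c^i \<le> 1" using c by (intro power_le_one) auto
    then have "c^j * s \<le> c * s" using c s Suc by (intro mult_right_mono) auto
    then have "c^j * s \<le> u" using s(3) by linarith
    then have "F (c^j * s) \<le> 2" using below[of "c^j * s"] c s by simp
    then show ?thesis by simp
  qed
  \<comment> \<open>The increments F(c^j s) - F(c^(j+1) s) \<le> 9 \<beta> c^j s sum to at most 1/2.\<close>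
  have step: "F (c^j * s) - F (c^Suc j * s) \<le> 9 * \<beta> * s * c^j" for j
  proof -
    have pos: "0 < c^j * s" using c s by simp
    have "(F (c^j * s))^2 \<le> 3^2" using le_3[of j] nonneg[OF pos] by (intro power_mono) auto
    then have "\<beta> * (c^j * s) * (F (c^j * s))^2 \<le> \<beta> * (c^j * s) * 3^2"
      using \<beta> pos by (intro mult_left_mono) auto
    with gap[OF pos] show ?thesis by (simp add: mult_ac)
  qed
  have "F s - F (c^n * s) \<le> 9 * \<beta> * s * (\<Sum>j<n. c^j)" for n
  proof (induction n)
    case (Suc n)
    then show ?case using step[of n] by (simp add: distrib_left)
  qed simp
  also have "9 * \<beta> * s * (\<Sum>j<N. c^j) \<le> 9 * \<beta> * s * (1 / (1 - c))"
    using c \<beta> s by (intro mult_left_mono) (auto simp: sum_gp_strict divide_right_mono)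
  also have "\<dots> \<le> 9 * \<beta> * ((1 - c) / (18 * \<beta>)) * (1 / (1 - c))"
    using s \<beta> c by (intro mult_right_mono mult_left_mono) auto
  also have "\<dots> = 1/2" using \<beta> c by (simp add: field_simps)
  finally show ?thesis using small by linarith
qed

lemma quadratic_gap_bound:
  fixes F :: "real \<Rightarrow> real"
  assumes c: "0 < c" "c < 1" and \<beta>: "0 < \<beta>" and r: "1 < r"
    and nonneg: "\<And>t. 0 < t \<Longrightarrow> 0 \<le> F t"
    and mono: "\<And>s t. 0 < s \<Longrightarrow> s \<le> t \<Longrightarrow> F s \<le> F t"
    and jump: "\<And>u s. 0 < u \<Longrightarrow> u \<le> s \<Longrightarrow> s \<le> r * u \<Longrightarrow> F s \<le> 3/2 * F u"
    and gap: "\<And>t. 0 < t \<Longrightarrow> F t - F (c * t) \<le> \<beta> * t * (F t)^2"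
    and small: "\<And>t. 0 < t \<Longrightarrow> \<exists>N. F (c^N * t) \<le> 3/2"
    and t: "0 < t" "t \<le> (1 - c) / (18 * \<beta>)"
  shows "F t \<le> 2"
proof -
  define T where "T = (1 - c) / (18 * \<beta>)"
  have "0 < T" using \<beta> c by (simp add: T_def)
  then obtain N0 where N0: "F (c^N0 * T) \<le> 3/2" using small by blast
  define t0 where "t0 = c^N0 * T"
  have "0 < t0" using c \<open>0 < T\<close> by (simp add: t0_def)
  define r' where "r' = min r (1/c)"
  have r': "1 < r'" "c * r' \<le> 1" using r c by (auto simp: r'_def min_def field_simps)
  \<comment> \<open>Crossing one step of the grid t0 * r'^n multiplies F by at most 3/2, and
    quadratic_gap_extend brings the bound back down to 2.\<close>
  have grid: "F s \<le> 2" if "0 < s" "s \<le> T" "s \<le> t0 * r'^n" for n s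
    using that
  proof (induction n arbitrary: s)
    case 0
    then have "F s \<le> F t0" by (intro mono) auto
    then show ?case using N0 by (simp add: t0_def)
  next
    case (Suc n)
    define u where "u = t0 * r'^n"
    have "0 < u" using \<open>0 < t0\<close> r' by (simp add: u_def)
    show ?case
    proof (cases "s \<le> u")
      case True
      then show ?thesis using Suc by (simp add: u_def)
    next
      case False
      have "s \<le> r' * u" using Suc.prems by (simp add: u_def mult_ac)
      also have "r' * u \<le> r * u" using \<open>0 < u\<close> by (intro mult_right_mono) (auto simp: r'_def)
      finally have "F s \<le> 3/2 * F u" using False \<open>0 < u\<close> by (intro jump) auto
      moreover have "c * s \<le> u"
      proof -
        have "c * s \<le> (c * r') * u" using \<open>s \<le> r' * u\<close> c by (simp add: mult.assoc)
        also have "\<dots> \<le> u" using r'(2) \<open>0 < u\<close> by (simp add: mult_left_le_one_le)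
        finally show ?thesis .
      qed
      moreover obtain N where "F (c^N * s) \<le> 3/2" using small Suc.prems by blast
      ultimately show ?thesis
        using quadratic_gap_extend[OF c \<beta> nonneg gap] Suc.IH False \<open>0 < u\<close> Suc.prems
        by (auto simp: T_def u_def)
    qed
  qed
  obtain n where "T / t0 < r'^n" using real_arch_pow[OF r'(1)] by blast
  then have "T \<le> t0 * r'^n" using \<open>0 < t0\<close> by (simp add: field_simps)
  then show ?thesis using grid[of t n] t by (simp add: T_def)
qed

lemma quadratic_gap_of_mixture_bound:
  fixes F F' q V t m :: real
  assumes q: "0 < q" "q \<le> 1" and F: "0 \<le> F'" "F' \<le> F"
    and mixture: "F \<le> (q * F' + (1 - q) * F) * V" and V: "V \<le> 1 + t * m * F"
    and "0 \<le> t" "0 \<le> m"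
  shows "F - F' \<le> m / q * t * F^2"
proof -
  have "0 \<le> q * F'" "q * F' \<le> q * F" "0 \<le> (1 - q) * F" using q F by auto
  then have S: "0 \<le> q * F' + (1 - q) * F" "q * F' + (1 - q) * F \<le> F"
    by (auto simp: algebra_simps)
  have "F \<le> (q * F' + (1 - q) * F) * (1 + t * m * F)"
    using mixture V S(1) by (meson mult_left_mono order_trans)
  also have "\<dots> \<le> q * F' + (1 - q) * F + F * (t * m * F)"
    using S assms by (simp add: distrib_left mult_right_mono)
  finally have "q * (F - F') \<le> t * m * F^2" by (simp add: algebra_simps power2_eq_square)
  then show ?thesis using q by (simp add: field_simps)
qed

lemma ennreal_le_exp_of_geometric_growth:
  fixes f :: "nat \<Rightarrow> ennreal"
  assumes "f 0 \<le> 1" "0 \<le> b" and growth: "\<And>n. n < N \<Longrightarrow> f (Suc n) \<le> f n * (1 + ennreal b)"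
  shows "f N \<le> ennreal (exp (N * b))"
proof -
  have "f n \<le> ennreal ((1 + b)^n)" if "n \<le> N" for n
    using that
  proof (induction n)
    case (Suc n)
    then have "f (Suc n) \<le> ennreal ((1 + b)^n) * (1 + ennreal b)"
      by (intro order_trans[OF growth] mult_right_mono) auto
    then show ?case using \<open>0 \<le> b\<close> by (simp add: ennreal_mult' mult.commute)
  qed (use assms in simp)
  also have "(1 + b)^N \<le> exp b ^ N"
    using \<open>0 \<le> b\<close> by (intro power_mono) (auto simp: add.commute)
  finally show ?thesis by (simp add: exp_of_nat_mult[symmetric] ennreal_leI order_trans)
qed

lemma AE_ge_if_null_below:
  fixes M :: "real measure"
  assumes "sets M = sets borel" and null: "\<And>c. c < b \<Longrightarrow> emeasure M {x. x \<le> c} = 0"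
  shows "AE x in M. b \<le> x"
proof -
  have "{x. x < b} = (\<Union>n. {x. x \<le> b - 1 / Suc n})"
  proof safe
    fix x assume "x < b"
    then obtain n where "1 / Suc n < b - x" by (metis diff_gt_0_iff_gt nat_approx_posE)
    then show "x \<in> (\<Union>n. {x. x \<le> b - 1 / Suc n})" by (intro UN_I[of n]) auto
  qed (auto simp: le_less_trans)
  also have "\<dots> \<in> null_sets M"
    using null by (intro null_sets_UN) (auto simp: null_sets_def assms(1))
  finally show ?thesis using AE_not_in[of "{x. x < b}" M] by auto
qed

lemma AE_le_of_esssup_le:
  fixes M :: "real measure"
  assumes "esssup M ereal \<le> ereal c"
  shows "AE x in M. x \<le> c"
  using esssup_AE[of ereal M] by eventually_elim (use assms in \<open>auto dest: order_trans\<close>)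

section \<open>Size-biased distributions\<close>

locale size_biasable = nonneg_real_distribution \<mu> for \<mu> +
  assumes integrable_id: "integrable \<mu> (\<lambda>x. x)" and mean_pos: "0 < mean \<mu>"
begin

abbreviation \<nu> :: "real measure" where "\<nu> \<equiv> size_biased \<mu>"

abbreviation m :: real where "m \<equiv> mean \<mu>"

lemma nn_integral_id: "(\<integral>\<^sup>+x. ennreal x \<partial>\<mu>) = ennreal m"
  using nn_integral_eq_integral[OF integrable_id AE_nonneg] by (simp add: mean_def)

lemma sets_size_biased[measurable_cong]: "sets \<nu> = sets borel"
  by (simp add: size_biased_def)

lemma nn_integral_size_biased:
  assumes [measurable]: "h \<in> borel_measurable borel"
  shows "(\<integral>\<^sup>+x. h x \<partial>\<nu>) = (\<integral>\<^sup>+x. ennreal (x / m) * h x \<partial>\<mu>)"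
  unfolding size_biased_def by (subst nn_integral_density) auto

lemma nn_integral_id_mult:
  assumes [measurable]: "h \<in> borel_measurable borel"
  shows "(\<integral>\<^sup>+x. ennreal x * h x \<partial>\<mu>) = ennreal m * (\<integral>\<^sup>+x. h x \<partial>\<nu>)"
proof -
  have "ennreal m * (\<integral>\<^sup>+x. h x \<partial>\<nu>) = (\<integral>\<^sup>+x. ennreal m * (ennreal (x / m) * h x) \<partial>\<mu>)"
    by (simp add: nn_integral_size_biased nn_integral_cmult)
  also have "\<dots> = (\<integral>\<^sup>+x. ennreal x * h x \<partial>\<mu>)"
    using AE_nonneg
  proof (intro nn_integral_cong_AE, eventually_elim)
    case (elim x)
    then have "ennreal m * ennreal (x / m) = ennreal x"
      using mean_pos by (simp add: ennreal_mult[symmetric])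
    then show ?case by (simp add: mult.assoc[symmetric])
  qed
  finally show ?thesis ..
qed

lemma prob_space_size_biased: "prob_space \<nu>"
proof (rule prob_spaceI)
  have "emeasure \<nu> (space \<nu>) = (\<integral>\<^sup>+x. 1 \<partial>\<nu>)" by simp
  also have "\<dots> = (\<integral>\<^sup>+x. ennreal (x / m) \<partial>\<mu>)"
    using nn_integral_size_biased[of "\<lambda>_. 1"] by simp
  also have "\<dots> = (\<integral>\<^sup>+x. ennreal x * ennreal (1 / m) \<partial>\<mu>)"
    using AE_nonneg by (intro nn_integral_cong_AE) (auto simp: ennreal_mult'[symmetric])
  also have "\<dots> = 1"
    using mean_pos by (simp add: nn_integral_multc nn_integral_id ennreal_mult'[symmetric])
  finally show "emeasure \<nu> (space \<nu>) = 1" .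
qed

lemma AE_nonneg_size_biased: "AE x in \<nu>. 0 \<le> x"
  unfolding size_biased_def by (subst AE_density) (auto intro: AE_mp[OF AE_nonneg])

sublocale nu: nonneg_real_distribution \<nu>
  by (intro nonneg_real_distribution.intro real_distribution.intro real_distribution_axioms.intro
      nonneg_real_distribution_axioms.intro prob_space_size_biased sets_size_biased AE_nonneg_size_biased)

lemma one_plus_mean_le_mgf:
  assumes "0 \<le> s"
  shows "ennreal (1 + s * m) \<le> mgf \<mu> s"
proof -
  have "ennreal (1 + s * m) = (\<integral>\<^sup>+x. 1 \<partial>\<mu>) + ennreal s * (\<integral>\<^sup>+x. ennreal x \<partial>\<mu>)"
    using assms mean_pos by (simp add: nn_integral_id emeasure_UNIV ennreal_mult)
  also have "\<dots> = (\<integral>\<^sup>+x. 1 + ennreal s * ennreal x \<partial>\<mu>)"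
    by (subst nn_integral_add) (auto simp: nn_integral_cmult)
  also have "\<dots> \<le> mgf \<mu> s" unfolding mgf_def
    using AE_nonneg
  proof (intro nn_integral_mono_AE, eventually_elim)
    case (elim x)
    have "ennreal (1 + s * x) \<le> ennreal (exp (s * x))" by (intro ennreal_leI exp_ge_add_one_self)
    then show ?case using elim assms by (simp add: ennreal_mult)
  qed
  finally show ?thesis .
qed

lemma mgf_size_biased_finite:
  assumes "s < s0" "mgf \<mu> s0 < \<infinity>"
  shows "mgf \<nu> s < \<infinity>"
proof -
  have "mgf \<nu> s = (\<integral>\<^sup>+x. ennreal (x / m) * ennreal (exp (s * x)) \<partial>\<mu>)"
    unfolding mgf_def by (rule nn_integral_size_biased) simp
  also have "\<dots> \<le> (\<integral>\<^sup>+x. ennreal (1 / (m * (s0 - s))) * ennreal (exp (s0 * x)) \<partial>\<mu>)"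
    using AE_nonneg
  proof (intro nn_integral_mono_AE, eventually_elim)
    case (elim x)
    \<comment> \<open>(s0 - s) x \<le> e^{(s0 - s) x} gives x e^{s x} \<le> e^{s0 x} / (s0 - s)\<close>
    have "(s0 - s) * x \<le> exp ((s0 - s) * x)" using exp_ge_add_one_self[of "(s0 - s) * x"] by linarith
    then have "(s0 - s) * x * exp (s * x) \<le> exp ((s0 - s) * x) * exp (s * x)"
      by (intro mult_right_mono) auto
    also have "\<dots> = exp (s0 * x)" by (simp add: exp_add[symmetric] algebra_simps)
    finally have "x * exp (s * x) \<le> exp (s0 * x) / (s0 - s)"
      using assms by (simp add: field_simps)
    then have "x * exp (s * x) / m \<le> exp (s0 * x) / (s0 - s) / m"
      using mean_pos by (intro divide_right_mono) auto
    then have "x / m * exp (s * x) \<le> 1 / (m * (s0 - s)) * exp (s0 * x)"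
      by (simp add: field_simps)
    then show ?case using elim mean_pos assms by (simp add: ennreal_mult[symmetric] ennreal_leI del: ennreal_1)
  qed
  also have "\<dots> = ennreal (1 / (m * (s0 - s))) * mgf \<mu> s0"
    unfolding mgf_def by (rule nn_integral_cmult) simp
  also have "\<dots> < \<infinity>" using assms by (simp add: ennreal_mult_less_top)
  finally show ?thesis .
qed

lemma mgf_le_exp_plus_mgf_size_biased:
  assumes "0 \<le> s"
  shows "mgf \<mu> s \<le> ennreal (exp s) + ennreal m * mgf \<nu> s"
proof -
  have "mgf \<mu> s \<le> (\<integral>\<^sup>+x. ennreal (exp s) + ennreal x * ennreal (exp (s * x)) \<partial>\<mu>)"
    unfolding mgf_def using AE_nonneg
  proof (intro nn_integral_mono_AE, eventually_elim)
    case (elim x)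
    show ?case
    proof (cases "x \<le> 1")
      case True
      then have "ennreal (exp (s * x)) \<le> ennreal (exp s)"
        using assms by (intro ennreal_leI) (simp add: mult_left_le)
      then show ?thesis by (simp add: add_increasing2)
    next
      case False
      then have "ennreal (exp (s * x)) \<le> ennreal x * ennreal (exp (s * x))"
        by (simp add: ennreal_mult[symmetric] ennreal_leI)
      then show ?thesis by (simp add: add_increasing)
    qed
  qed
  also have "\<dots> = ennreal (exp s) + ennreal m * mgf \<nu> s"
    by (subst nn_integral_add) (auto simp: emeasure_UNIV nn_integral_id_mult mgf_def)
  finally show ?thesis .
qed

lemma mgf_trunc_le_size_biased:
  assumes "0 \<le> t" "0 \<le> K"
  shows "mgf_trunc \<mu> K t \<le> 1 + ennreal (t * m) * mgf_trunc \<nu> K t"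
proof -
  have "mgf_trunc \<mu> K t \<le> (\<integral>\<^sup>+x. 1 + ennreal t * (ennreal x * ennreal (exp (min (t * x) K))) \<partial>\<mu>)"
    unfolding mgf_trunc_def using AE_nonneg
  proof (intro nn_integral_mono_AE, eventually_elim)
    case (elim x)
    define u where "u = min (t * x) K"
    have u: "0 \<le> u" "u \<le> t * x" using assms elim by (auto simp: u_def)
    have "1 - u \<le> exp (-u)" using exp_ge_add_one_self[of "-u"] by simp
    then have "(1 - u) * exp u \<le> exp (-u) * exp u" by (intro mult_right_mono) auto
    then have "exp u \<le> 1 + u * exp u" by (simp add: exp_minus field_simps)
    also have "u * exp u \<le> t * x * exp u" using u by (intro mult_right_mono) auto
    finally have "ennreal (exp u) \<le> ennreal (1 + t * (x * exp u))" by (simp add: mult_ac ennreal_leI)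
    then show ?case using assms elim by (simp add: u_def ennreal_mult)
  qed
  also have "\<dots> = 1 + ennreal (t * m) * mgf_trunc \<nu> K t"
    using assms mean_pos
    by (subst nn_integral_add) (auto simp: nn_integral_cmult emeasure_UNIV nn_integral_id_mult mgf_trunc_def ennreal_mult mult.assoc)
  finally show ?thesis .
qed

lemma mgf_cut_step:
  assumes "0 \<le> h" "0 \<le> K"
  shows "mgf_cut \<mu> K (t + h) \<le> mgf_cut \<mu> K t + ennreal (h * exp (h * K) * m) * mgf_cut \<nu> K t"
proof -
  let ?g = "\<lambda>x. ennreal (exp (t * x)) * indicator {..K} x"
  have "mgf_cut \<mu> K (t + h) \<le> (\<integral>\<^sup>+x. ?g x + ennreal (h * exp (h * K)) * (ennreal x * ?g x) \<partial>\<mu>)"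
    unfolding mgf_cut_def using AE_nonneg
  proof (intro nn_integral_mono_AE, eventually_elim)
    case (elim x)
    show ?case
    proof (cases "x \<le> K")
      case True
      have "1 - h * x \<le> exp (- (h * x))" using exp_ge_add_one_self[of "- (h * x)"] by simp
      then have "(1 - h * x) * exp (h * x) \<le> exp (- (h * x)) * exp (h * x)"
        by (intro mult_right_mono) auto
      then have "exp (h * x) \<le> 1 + h * x * exp (h * x)" by (simp add: exp_minus field_simps)
      also have "h * x * exp (h * x) \<le> h * x * exp (h * K)"
        using True assms elim by (intro mult_left_mono) (auto intro: mult_left_mono)
      finally have "exp (t * x) * exp (h * x) \<le> exp (t * x) * (1 + h * exp (h * K) * x)"
        by (intro mult_left_mono) (auto simp: mult_ac)
      then have "exp ((t + h) * x) \<le> exp (t * x) + h * exp (h * K) * (x * exp (t * x))"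
        by (simp add: exp_add[symmetric] algebra_simps)
      then have "ennreal (exp ((t + h) * x)) \<le> ennreal (exp (t * x) + h * exp (h * K) * (x * exp (t * x)))"
        by (rule ennreal_leI)
      also have "\<dots> = ennreal (exp (t * x)) + ennreal (h * exp (h * K)) * (ennreal x * ennreal (exp (t * x)))"
        using assms elim by (simp add: ennreal_mult)
      finally show ?thesis using True by simp
    qed simp
  qed
  also have "\<dots> = mgf_cut \<mu> K t + ennreal (h * exp (h * K)) * (\<integral>\<^sup>+x. ennreal x * ?g x \<partial>\<mu>)"
    unfolding mgf_cut_def by (subst nn_integral_add) (auto simp: nn_integral_cmult)
  also have "(\<integral>\<^sup>+x. ennreal x * ?g x \<partial>\<mu>) = ennreal m * mgf_cut \<nu> K t"
    unfolding mgf_cut_def by (rule nn_integral_id_mult) simp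
  also have "ennreal (h * exp (h * K)) * (ennreal m * mgf_cut \<nu> K t)
      = ennreal (h * exp (h * K) * m) * mgf_cut \<nu> K t"
    using assms mean_pos by (simp add: ennreal_mult mult.assoc)
  finally show ?thesis .
qed

lemma mgf_neg_1_less_1: "mgf \<mu> (-1) < 1"
proof -
  have "mgf \<mu> (-1) \<noteq> 1"
  proof
    assume eq: "mgf \<mu> (-1) = 1"
    let ?D = "\<integral>\<^sup>+x. ennreal (1 - exp (- x)) \<partial>\<mu>"
    have "?D + mgf \<mu> (-1) = (\<integral>\<^sup>+x. ennreal (1 - exp (- x)) + ennreal (exp (-1 * x)) \<partial>\<mu>)"
      unfolding mgf_def by (rule nn_integral_add[symmetric]) auto
    also have "\<dots> = (\<integral>\<^sup>+x. 1 \<partial>\<mu>)"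
      using AE_nonneg by (intro nn_integral_cong_AE) (auto elim!: eventually_mono simp: ennreal_plus[symmetric] simp del: ennreal_plus)
    finally have "1 + ?D = 1 + 0" using eq by (simp add: emeasure_UNIV add.commute)
    then have "?D = 0" unfolding ennreal_add_left_cancel by simp
    then have "AE x in \<mu>. ennreal (1 - exp (- x)) = 0" by (subst (asm) nn_integral_0_iff_AE) auto
    with AE_nonneg have "AE x in \<mu>. ennreal x = 0" by eventually_elim (auto simp: ennreal_eq_0_iff)
    then have "(\<integral>\<^sup>+x. ennreal x \<partial>\<mu>) = 0" by (simp add: nn_integral_0_iff_AE)
    then show False using nn_integral_id mean_pos by simp
  qed
  then show ?thesis using mgf_le_1[of "-1"] by simp
qed

end

section \<open>Solutions of equation (2)\<close>

locale eq2_solution = size_biasable \<mu> + rho: prob_space \<rho> for \<rho> :: "real measure" and \<mu> +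
  assumes sets_rho[measurable_cong]: "sets \<rho> = sets borel"
    and AE_pos: "AE a in \<rho>. 0 < a"
    and fixed_point: "distr (\<rho> \<Otimes>\<^sub>M (size_biased \<mu> \<Otimes>\<^sub>M \<mu>)) borel (\<lambda>(a, x, y). a * x + y) = size_biased \<mu>"

lemma eq2_solutionI:
  assumes "prob_space \<rho>" "sets \<rho> = sets borel" "AE a in \<rho>. 0 < a" "solves_eq2 \<rho> \<mu>"
  shows "eq2_solution \<rho> \<mu>"
proof -
  have \<mu>: "prob_space \<mu>" "sets \<mu> = sets borel" "emeasure \<mu> {x. x < 0} = 0"
    "integrable \<mu> (\<lambda>x. x)" "0 < mean \<mu>"
    and eq: "distr (\<rho> \<Otimes>\<^sub>M (size_biased \<mu> \<Otimes>\<^sub>M \<mu>)) borel (\<lambda>(a, x, y). a * x + y) = size_biased \<mu>"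
    using assms(4) by (auto simp: solves_eq2_def)
  have "AE x in \<mu>. 0 \<le> x"
    using \<mu>(3) by (intro AE_I[where N="{x. x < 0}"]) (auto simp: \<mu>(2))
  then show ?thesis
    using assms \<mu> eq
    by (auto intro!: eq2_solution.intro size_biasable.intro nonneg_real_distribution.intro
        real_distribution.intro simp: eq2_solution_axioms_def size_biasable_axioms_def
        nonneg_real_distribution_axioms_def real_distribution_axioms_def)
qed

context eq2_solution
begin

lemma nn_integral_size_biased_iterated:
  assumes g[measurable]: "g \<in> borel_measurable borel"
  shows "(\<integral>\<^sup>+z. g z \<partial>\<nu>) = (\<integral>\<^sup>+a. \<integral>\<^sup>+x. \<integral>\<^sup>+y. g (a * x + y) \<partial>\<mu> \<partial>\<nu> \<partial>\<rho>)"
proof -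
  interpret nu_mu: pair_prob_space \<nu> \<mu> by unfold_locales
  have [measurable]: "(\<lambda>(a, x, y). a * x + y) \<in> \<rho> \<Otimes>\<^sub>M (\<nu> \<Otimes>\<^sub>M \<mu>) \<rightarrow>\<^sub>M borel"
    by measurable
  have "(\<integral>\<^sup>+z. g z \<partial>\<nu>) = (\<integral>\<^sup>+p. g ((\<lambda>(a, x, y). a * x + y) p) \<partial>(\<rho> \<Otimes>\<^sub>M (\<nu> \<Otimes>\<^sub>M \<mu>)))"
    by (subst fixed_point[symmetric]) (simp add: nn_integral_distr)
  also have "\<dots> = (\<integral>\<^sup>+a. \<integral>\<^sup>+p. g (a * fst p + snd p) \<partial>(\<nu> \<Otimes>\<^sub>M \<mu>) \<partial>\<rho>)"
    by (subst nu_mu.P.nn_integral_fst[symmetric]) (auto simp: case_prod_beta)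
  also have "\<dots> = (\<integral>\<^sup>+a. \<integral>\<^sup>+x. \<integral>\<^sup>+y. g (a * x + y) \<partial>\<mu> \<partial>\<nu> \<partial>\<rho>)"
  proof (intro nn_integral_cong)
    fix a
    have "(\<lambda>p. g (a * fst p + snd p)) \<in> borel_measurable (\<nu> \<Otimes>\<^sub>M \<mu>)" by measurable
    from nn_integral_fst[OF this] show "(\<integral>\<^sup>+p. g (a * fst p + snd p) \<partial>(\<nu> \<Otimes>\<^sub>M \<mu>))
        = (\<integral>\<^sup>+x. \<integral>\<^sup>+y. g (a * x + y) \<partial>\<mu> \<partial>\<nu>)" by simp
  qed
  finally show ?thesis .
qed

lemma nn_integral_iterated_mult:
  assumes g1: "(\<lambda>(a, x). g1 a x) \<in> borel_measurable (borel \<Otimes>\<^sub>M borel)"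
    and [measurable]: "g2 \<in> borel_measurable borel"
  shows "(\<integral>\<^sup>+a. \<integral>\<^sup>+x. \<integral>\<^sup>+y. g1 a x * g2 y \<partial>\<mu> \<partial>\<nu> \<partial>\<rho>)
       = (\<integral>\<^sup>+a. \<integral>\<^sup>+x. g1 a x \<partial>\<nu> \<partial>\<rho>) * (\<integral>\<^sup>+y. g2 y \<partial>\<mu>)"
proof -
  have [measurable]: "g1 a \<in> borel_measurable borel" for a
    using measurable_compose[OF measurable_Pair1'[of a borel borel] g1] by simp
  have "(\<lambda>(a, x). g1 a x) \<in> borel_measurable (\<rho> \<Otimes>\<^sub>M \<nu>)"
    using g1 by (simp add: measurable_cong_sets[OF sets_pair_measure_cong[OF sets_rho sets_size_biased] refl])
  from nu.borel_measurable_nn_integral[OF this]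
  have "(\<lambda>a. \<integral>\<^sup>+x. g1 a x \<partial>\<nu>) \<in> borel_measurable \<rho>" by simp
  have "(\<integral>\<^sup>+a. \<integral>\<^sup>+x. \<integral>\<^sup>+y. g1 a x * g2 y \<partial>\<mu> \<partial>\<nu> \<partial>\<rho>)
      = (\<integral>\<^sup>+a. \<integral>\<^sup>+x. g1 a x * (\<integral>\<^sup>+y. g2 y \<partial>\<mu>) \<partial>\<nu> \<partial>\<rho>)"
    by (intro nn_integral_cong nn_integral_cmult) simp
  also have "\<dots> = (\<integral>\<^sup>+a. (\<integral>\<^sup>+x. g1 a x \<partial>\<nu>) * (\<integral>\<^sup>+y. g2 y \<partial>\<mu>) \<partial>\<rho>)"
    by (intro nn_integral_cong nn_integral_multc) simp
  also have "\<dots> = (\<integral>\<^sup>+a. \<integral>\<^sup>+x. g1 a x \<partial>\<nu> \<partial>\<rho>) * (\<integral>\<^sup>+y. g2 y \<partial>\<mu>)"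
    by (rule nn_integral_multc) fact
  finally show ?thesis .
qed

lemma nn_integral_size_biased_le_product:
  assumes [measurable]: "g \<in> borel_measurable borel"
    and [measurable]: "(\<lambda>(a, x). g1 a x) \<in> borel_measurable (borel \<Otimes>\<^sub>M borel)"
    and [measurable]: "g2 \<in> borel_measurable borel"
    and le: "\<And>a x y. 0 < a \<Longrightarrow> 0 \<le> x \<Longrightarrow> 0 \<le> y \<Longrightarrow> g (a * x + y) \<le> g1 a x * g2 y"
  shows "(\<integral>\<^sup>+z. g z \<partial>\<nu>) \<le> (\<integral>\<^sup>+a. \<integral>\<^sup>+x. g1 a x \<partial>\<nu> \<partial>\<rho>) * (\<integral>\<^sup>+y. g2 y \<partial>\<mu>)"
proof -
  have "(\<integral>\<^sup>+z. g z \<partial>\<nu>) = (\<integral>\<^sup>+a. \<integral>\<^sup>+x. \<integral>\<^sup>+y. g (a * x + y) \<partial>\<mu> \<partial>\<nu> \<partial>\<rho>)"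
    by (rule nn_integral_size_biased_iterated) simp
  also have "\<dots> \<le> (\<integral>\<^sup>+a. \<integral>\<^sup>+x. \<integral>\<^sup>+y. g1 a x * g2 y \<partial>\<mu> \<partial>\<nu> \<partial>\<rho>)"
    using AE_pos
  proof (intro nn_integral_mono_AE, eventually_elim)
    case (elim a)
    show ?case using nu.AE_nonneg
    proof (intro nn_integral_mono_AE, eventually_elim)
      case (elim x)
      show ?case using AE_nonneg
        by (intro nn_integral_mono_AE, eventually_elim) (use \<open>0 < a\<close> \<open>0 \<le> x\<close> in \<open>simp add: le\<close>)
    qed
  qed
  also have "\<dots> = (\<integral>\<^sup>+a. \<integral>\<^sup>+x. g1 a x \<partial>\<nu> \<partial>\<rho>) * (\<integral>\<^sup>+y. g2 y \<partial>\<mu>)"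
    by (rule nn_integral_iterated_mult) simp_all
  finally show ?thesis .
qed

definition mixed_mgf :: "real \<Rightarrow> ennreal" where
  "mixed_mgf s = (\<integral>\<^sup>+a. mgf \<nu> (s * a) \<partial>\<rho>)"

lemma mgf_size_biased_eq: "mgf \<nu> s = mixed_mgf s * mgf \<mu> s"
proof -
  have "mgf \<nu> s = (\<integral>\<^sup>+a. \<integral>\<^sup>+x. \<integral>\<^sup>+y. ennreal (exp (s * (a * x + y))) \<partial>\<mu> \<partial>\<nu> \<partial>\<rho>)"
    unfolding mgf_def by (rule nn_integral_size_biased_iterated) simp
  also have "\<dots> = (\<integral>\<^sup>+a. \<integral>\<^sup>+x. \<integral>\<^sup>+y. ennreal (exp (s * a * x)) * ennreal (exp (s * y)) \<partial>\<mu> \<partial>\<nu> \<partial>\<rho>)"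
    by (intro nn_integral_cong) (simp add: ennreal_mult[symmetric] exp_add[symmetric] algebra_simps)
  also have "\<dots> = mixed_mgf s * mgf \<mu> s"
    unfolding mixed_mgf_def mgf_def by (rule nn_integral_iterated_mult) simp_all
  finally show ?thesis .
qed

lemma mixed_mgf_mono:
  assumes "0 \<le> s" "s \<le> t"
  shows "mixed_mgf s \<le> mixed_mgf t"
  unfolding mixed_mgf_def using AE_pos
proof (intro nn_integral_mono_AE, eventually_elim)
  case (elim a)
  then have "s * a \<le> t * a" using assms by (intro mult_right_mono) auto
  then show ?case by (rule nu.mgf_mono)
qed

lemma mixed_mgf_le_mgf:
  assumes "AE a in \<rho>. a \<le> c" "0 \<le> s"
  shows "mixed_mgf s \<le> mgf \<nu> (c * s)"
proof -
  have "mixed_mgf s \<le> (\<integral>\<^sup>+a. mgf \<nu> (c * s) \<partial>\<rho>)"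
    unfolding mixed_mgf_def using assms(1)
  proof (intro nn_integral_mono_AE, eventually_elim)
    case (elim a)
    then have "a * s \<le> c * s" using assms(2) by (intro mult_right_mono)
    then have "s * a \<le> c * s" by (simp add: mult.commute)
    then show ?case by (rule nu.mgf_mono)
  qed
  then show ?thesis using rho.emeasure_space_1 by (simp add: sets_eq_imp_space_eq[OF sets_rho])
qed

lemma mgf_ge_mixed_mgf:
  assumes "0 \<le> s"
  shows "emeasure \<rho> {a. c < a} * mgf \<nu> (c * s) \<le> mixed_mgf s"
proof -
  have "emeasure \<rho> {a. c < a} * mgf \<nu> (c * s) = (\<integral>\<^sup>+a. mgf \<nu> (c * s) * indicator {a. c < a} a \<partial>\<rho>)"
    by (subst nn_integral_cmult_indicator) (auto simp: mult.commute)
  also have "\<dots> \<le> mixed_mgf s"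
    unfolding mixed_mgf_def
  proof (intro nn_integral_mono)
    fix a
    have "c * s \<le> a * s" if "c < a" using that assms by (intro mult_right_mono) auto
    then have "c * s \<le> s * a" if "c < a" using that by (simp add: mult.commute)
    then show "mgf \<nu> (c * s) * indicator {a. c < a} a \<le> mgf \<nu> (s * a)"
      by (auto simp: indicator_def intro: nu.mgf_mono)
  qed
  finally show ?thesis .
qed

lemma mgf_cut_size_biased_le: "mgf_cut \<nu> K t \<le> mixed_mgf t * mgf_cut \<mu> K t"
  unfolding mgf_cut_def mixed_mgf_def mgf_def
proof (rule nn_integral_size_biased_le_product)
  fix a x y :: real
  assume "0 < a" "0 \<le> x" "0 \<le> y"
  then have "0 \<le> a * x" by simp
  have "exp (t * (a * x + y)) = exp (t * a * x) * exp (t * y)"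
    by (simp add: exp_add[symmetric] distrib_left mult.assoc)
  then show "ennreal (exp (t * (a * x + y))) * indicator {..K} (a * x + y)
      \<le> ennreal (exp (t * a * x)) * (ennreal (exp (t * y)) * indicator {..K} y)"
    using \<open>0 \<le> a * x\<close> by (simp add: indicator_def ennreal_mult)
qed simp_all

lemma mgf_size_biased_contraction:
  assumes "0 \<le> s" "0 \<le> c"
  shows "ennreal (measure \<rho> {a. c < a} * (1 + s * m)) * mgf \<nu> (c * s) \<le> mgf \<nu> s"
proof -
  have "ennreal (measure \<rho> {a. c < a} * (1 + s * m)) * mgf \<nu> (c * s)
      = (emeasure \<rho> {a. c < a} * mgf \<nu> (c * s)) * ennreal (1 + s * m)"
    using assms mean_pos by (simp add: rho.emeasure_eq_measure ennreal_mult mult_ac)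
  also have "\<dots> \<le> mixed_mgf s * mgf \<mu> s"
    using assms by (intro mult_mono mgf_ge_mixed_mgf one_plus_mean_le_mgf) auto
  also have "\<dots> = mgf \<nu> s" by (rule mgf_size_biased_eq[symmetric])
  finally show ?thesis .
qed

lemma mgf_size_biased_finite_dilation:
  assumes "0 < s" "1 \<le> c" "0 < measure \<rho> {a. c < a}" "mgf \<nu> s < \<infinity>"
  shows "mgf \<nu> (c * s) < \<infinity>" and "measure \<rho> {a. c < a} * (1 + s * m) \<le> 1"
proof -
  define p where "p = measure \<rho> {a. c < a} * (1 + s * m)"
  have "0 < s * m" using assms mean_pos by simp
  then have "0 < p" using assms by (simp add: p_def)
  have contr: "ennreal p * mgf \<nu> (c * s) \<le> mgf \<nu> s"
    unfolding p_def using assms by (intro mgf_size_biased_contraction) auto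
  show fin: "mgf \<nu> (c * s) < \<infinity>"
  proof (rule ccontr)
    assume "\<not> mgf \<nu> (c * s) < \<infinity>"
    then have "mgf \<nu> (c * s) = \<top>" by (simp add: less_top[symmetric])
    then have "ennreal p * mgf \<nu> (c * s) = \<top>" using \<open>0 < p\<close> by simp
    with contr assms(4) show False by (simp add: top_unique)
  qed
  obtain l where l: "mgf \<nu> s = ennreal l" "1 \<le> l"
    using assms(1,4) nu.one_le_mgf[of s] by (cases "mgf \<nu> s") (auto simp: top_unique)
  have "mgf \<nu> s \<le> mgf \<nu> (c * s)" using assms by (intro nu.mgf_mono) simp
  with contr have "ennreal p * ennreal l \<le> ennreal l"
    using l by (metis mult_left_mono order_trans zero_le)
  then have "p * l \<le> l" using l \<open>0 < p\<close> by (simp add: ennreal_mult[symmetric])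
  then show "measure \<rho> {a. c < a} * (1 + s * m) \<le> 1"
    using l by (simp add: p_def mult_le_cancel_right2)
qed

lemma esssup_le_1_if_mgf_finite:
  assumes "0 < s0" "mgf \<mu> s0 < \<infinity>"
  shows "esssup \<rho> ereal \<le> 1"
proof (rule ccontr)
  assume "\<not> ?thesis"
  then obtain c where "1 < ereal c" "ereal c < esssup \<rho> ereal"
    using ereal_dense2 by (metis not_le)
  then have c: "1 < c" and "0 < emeasure \<rho> {a. c < a}"
    using esssup_pos_measure[of ereal \<rho> c] by (auto simp: sets_eq_imp_space_eq[OF sets_rho])
  then have p: "0 < measure \<rho> {a. c < a}" by (simp add: rho.emeasure_eq_measure)
  define s1 where "s1 = s0 / 2"
  have "0 < s1" using assms by (simp add: s1_def)
  have fin: "mgf \<nu> (c^n * s1) < \<infinity>" for n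
  proof (induction n)
    case 0
    then show ?case using assms mgf_size_biased_finite[of s1 s0] by (simp add: s1_def)
  next
    case (Suc n)
    have "0 < c^n * s1" using c \<open>0 < s1\<close> by simp
    from mgf_size_biased_finite_dilation(1)[OF this _ p Suc] c show ?case by (simp add: mult.assoc)
  qed
  obtain n where n: "(1 / measure \<rho> {a. c < a} - 1) / (s1 * m) < c^n"
    using real_arch_pow[OF c] by blast
  have "0 < c^n * s1" using c \<open>0 < s1\<close> by simp
  from mgf_size_biased_finite_dilation(2)[OF this _ p fin[of n]] c
  have "1 + c^n * s1 * m \<le> 1 / measure \<rho> {a. c < a}" using p by (simp add: field_simps)
  then have "c^n \<le> (1 / measure \<rho> {a. c < a} - 1) / (s1 * m)"
    using \<open>0 < s1\<close> mean_pos by (simp add: field_simps)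
  with n show False by simp
qed

lemma mgf_trunc_size_biased_le_mixture:
  assumes "AE a in \<rho>. a \<le> 1" "0 \<le> t" "0 \<le> K" "0 \<le> c"
  shows "mgf_trunc \<nu> K t \<le> (mgf_trunc \<nu> K (c * t) * emeasure \<rho> {a. a \<le> c}
      + mgf_trunc \<nu> K t * emeasure \<rho> {a. c < a}) * mgf_trunc \<mu> K t"
proof -
  have "mgf_trunc \<nu> K t \<le> (\<integral>\<^sup>+a. \<integral>\<^sup>+x. ennreal (exp (min (t * a * x) K)) \<partial>\<nu> \<partial>\<rho>) * mgf_trunc \<mu> K t"
    unfolding mgf_trunc_def
  proof (rule nn_integral_size_biased_le_product)
    fix a x y :: real
    assume "0 < a" "0 \<le> x" "0 \<le> y"
    then have "0 \<le> t * a * x" "0 \<le> t * y" using assms by simp_all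
    then have "min (t * (a * x + y)) K \<le> min (t * a * x) K + min (t * y) K"
      using assms by (simp add: algebra_simps min_def)
    then show "ennreal (exp (min (t * (a * x + y)) K))
        \<le> ennreal (exp (min (t * a * x) K)) * ennreal (exp (min (t * y) K))"
      by (simp add: ennreal_mult[symmetric] exp_add[symmetric] ennreal_leI)
  qed simp_all
  also have "(\<integral>\<^sup>+a. \<integral>\<^sup>+x. ennreal (exp (min (t * a * x) K)) \<partial>\<nu> \<partial>\<rho>)
      \<le> (\<integral>\<^sup>+a. mgf_trunc \<nu> K (c * t) * indicator {a. a \<le> c} a
          + mgf_trunc \<nu> K t * indicator {a. c < a} a \<partial>\<rho>)"
    using AE_pos assms(1)
  proof (intro nn_integral_mono_AE, eventually_elim)
    case (elim a)
    show ?case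
    proof (cases "a \<le> c")
      case True
      then have "a * t \<le> c * t" using assms by (intro mult_right_mono)
      then have "mgf_trunc \<nu> K (t * a) \<le> mgf_trunc \<nu> K (c * t)"
        by (intro nu.mgf_trunc_mono) (simp add: mult.commute)
      then show ?thesis using True by (simp add: mgf_trunc_def)
    next
      case False
      have "mgf_trunc \<nu> K (t * a) \<le> mgf_trunc \<nu> K t"
        using elim assms by (intro nu.mgf_trunc_mono) (simp add: mult_left_le)
      then show ?thesis using False by (simp add: mgf_trunc_def)
    qed
  qed
  also have "\<dots> = mgf_trunc \<nu> K (c * t) * emeasure \<rho> {a. a \<le> c} + mgf_trunc \<nu> K t * emeasure \<rho> {a. c < a}"
    by (subst nn_integral_add) (auto simp: nn_integral_cmult_indicator)
  finally show ?thesis by (simp add: mult_right_mono)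
qed

lemma not_AE_eq_1: "\<not> (AE a in \<rho>. a = 1)"
proof
  assume "AE a in \<rho>. a = 1"
  then have "mixed_mgf (-1) = (\<integral>\<^sup>+a. mgf \<nu> (-1) \<partial>\<rho>)"
    unfolding mixed_mgf_def by (intro nn_integral_cong_AE) (auto elim!: eventually_mono)
  also have "\<dots> = mgf \<nu> (-1)" using rho.emeasure_space_1 by simp
  finally have "mgf \<nu> (-1) * mgf \<mu> (-1) = mgf \<nu> (-1) * 1"
    using mgf_size_biased_eq[of "-1"] by (simp add: mult.commute)
  moreover have "0 < mgf \<nu> (-1)" "mgf \<nu> (-1) < \<infinity>"
    using nu.mgf_pos nu.mgf_le_1[of "-1"] by (auto simp: le_less_trans)
  ultimately have "mgf \<mu> (-1) = 1"
    using ennreal_mult_cancel_left[THEN iffD1] by fastforce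
  then show False using mgf_neg_1_less_1 by simp
qed

lemma ex_mass_below_1:
  assumes "AE a in \<rho>. a \<le> 1"
  obtains c where "0 < c" "c < 1" "0 < measure \<rho> {a. a \<le> c}"
proof (rule ccontr)
  note mass = that
  assume none: "\<not> thesis"
  have "emeasure \<rho> {a. a \<le> c} = 0" if "c < 1" for c
  proof (cases "0 < c")
    case True
    then have "\<not> 0 < measure \<rho> {a. a \<le> c}" using none mass[of c] that by blast
    then have "measure \<rho> {a. a \<le> c} = 0" using measure_nonneg[of \<rho> "{a. a \<le> c}"] by linarith
    then show ?thesis by (simp add: rho.emeasure_eq_measure)
  next
    case False
    have "AE a in \<rho>. \<not> a \<le> c" using AE_pos by eventually_elim (use False in auto)
    from emeasure_eq_0_AE[OF this] show ?thesis by (simp add: sets_eq_imp_space_eq[OF sets_rho])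
  qed
  then have "AE a in \<rho>. 1 \<le> a" by (intro AE_ge_if_null_below sets_rho)
  with assms have "AE a in \<rho>. a = 1" by eventually_elim simp
  with not_AE_eq_1 show False ..
qed

lemma mgf_trunc_quadratic_gap:
  assumes "AE a in \<rho>. a \<le> 1" "0 \<le> c" "c \<le> 1" "0 < measure \<rho> {a. a \<le> c}" "0 \<le> t" "0 \<le> K"
  defines "F \<equiv> \<lambda>t. enn2real (mgf_trunc \<nu> K t)"
  shows "F t - F (c * t) \<le> m / measure \<rho> {a. a \<le> c} * t * (F t)^2"
proof -
  define q where "q = measure \<rho> {a. a \<le> c}"
  define V where "V = enn2real (mgf_trunc \<mu> K t)"
  have fin: "mgf_trunc \<nu> K s = ennreal (F s)" for s
    using nu.mgf_trunc_neq_top by (simp add: F_def ennreal_enn2real_if)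
  have V: "mgf_trunc \<mu> K t = ennreal V"
    using mgf_trunc_neq_top by (simp add: V_def ennreal_enn2real_if)
  have F_nonneg: "0 \<le> F s" for s by (simp add: F_def)
  have "0 \<le> V" by (simp add: V_def)
  have "q \<le> 1" by (simp add: q_def)
  have q': "emeasure \<rho> {a. c < a} = ennreal (1 - q)"
  proof -
    have "{a. c < a} = space \<rho> - {a. a \<le> c}" by (auto simp: sets_eq_imp_space_eq[OF sets_rho])
    then show ?thesis by (simp add: q_def rho.emeasure_eq_measure rho.prob_compl)
  qed
  have "mgf_trunc \<nu> K t \<le> (mgf_trunc \<nu> K (c * t) * emeasure \<rho> {a. a \<le> c}
      + mgf_trunc \<nu> K t * emeasure \<rho> {a. c < a}) * mgf_trunc \<mu> K t"
    using assms by (intro mgf_trunc_size_biased_le_mixture) auto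
  also have "\<dots> = ennreal ((q * F (c * t) + (1 - q) * F t) * V)"
    unfolding fin V q' using F_nonneg \<open>0 \<le> V\<close> \<open>q \<le> 1\<close>
    by (simp add: q_def rho.emeasure_eq_measure ennreal_mult'[symmetric] ennreal_plus[symmetric] mult.commute
        del: ennreal_plus)
  finally have mixture: "F t \<le> (q * F (c * t) + (1 - q) * F t) * V"
    unfolding fin using F_nonneg \<open>q \<le> 1\<close> by (subst (asm) ennreal_le_iff) (auto simp: q_def V_def)
  have "mgf_trunc \<mu> K t \<le> 1 + ennreal (t * m) * mgf_trunc \<nu> K t"
    using assms by (intro mgf_trunc_le_size_biased) auto
  also have "\<dots> = ennreal (1 + t * m * F t)"
    unfolding fin using F_nonneg assms mean_pos by (simp add: ennreal_mult)
  finally have "V \<le> 1 + t * m * F t"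
    unfolding V using F_nonneg assms mean_pos by (subst (asm) ennreal_le_iff) auto
  moreover have "F (c * t) \<le> F t"
  proof -
    have "mgf_trunc \<nu> K (c * t) \<le> mgf_trunc \<nu> K t"
      using assms by (intro nu.mgf_trunc_mono) (simp add: mult_left_le_one_le)
    then show ?thesis unfolding fin using F_nonneg by simp
  qed
  ultimately show ?thesis
    using quadratic_gap_of_mixture_bound[OF _ \<open>q \<le> 1\<close> F_nonneg _ mixture] assms mean_pos
    by (simp add: q_def)
qed

lemma mgf_trunc_size_biased_le_2:
  assumes "AE a in \<rho>. a \<le> 1" "0 < c" "c < 1" "0 < measure \<rho> {a. a \<le> c}" "0 \<le> K"
  shows "mgf_trunc \<nu> K ((1 - c) * measure \<rho> {a. a \<le> c} / (18 * m)) \<le> 2"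
proof -
  define \<beta> where "\<beta> = m / measure \<rho> {a. a \<le> c}"
  define F where "F t = enn2real (mgf_trunc \<nu> K t)" for t
  define r where "r = 1 + ln (3/2) / (K + 1)"
  have fin: "mgf_trunc \<nu> K t = ennreal (F t)" for t
    using nu.mgf_trunc_neq_top by (simp add: F_def ennreal_enn2real_if)
  have F_nonneg: "0 \<le> F t" for t by (simp add: F_def)
  have "0 < \<beta>" using assms mean_pos by (simp add: \<beta>_def)
  have "F ((1 - c) / (18 * \<beta>)) \<le> 2"
  proof (rule quadratic_gap_bound[of c \<beta> r F])
    show "1 < r" using assms by (simp add: r_def)
    show "F s \<le> F t" if "0 < s" "s \<le> t" for s t
      using nu.mgf_trunc_mono[OF that(2), of K] F_nonneg by (simp add: fin)
    show "F s \<le> 3/2 * F u" if "0 < u" "u \<le> s" "s \<le> r * u" for u s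
    proof -
      have "ennreal (F s) \<le> ennreal (3/2) * ennreal (F u)"
        using nu.mgf_trunc_dilation_le[OF that[unfolded r_def] assms(5)] by (simp add: fin)
      then show ?thesis using F_nonneg by (simp add: ennreal_mult[symmetric])
    qed
    show "F t - F (c * t) \<le> \<beta> * t * (F t)^2" if "0 < t" for t
      using mgf_trunc_quadratic_gap[of c t K] that assms by (simp add: F_def \<beta>_def)
    show "\<exists>N. F (c^N * t) \<le> 3/2" if "0 < t" for t
    proof -
      have "(INF n. mgf_trunc \<nu> K (c^n * t)) < ennreal (3/2)"
        using nu.INF_mgf_trunc_geometric[of c K t] that assms by simp
      then obtain n where "mgf_trunc \<nu> K (c^n * t) < ennreal (3/2)" by (auto simp: INF_less_iff)
      then show ?thesis using F_nonneg by (auto simp: fin ennreal_less_iff intro: less_imp_le)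
    qed
  qed (use assms F_nonneg \<open>0 < \<beta>\<close> in auto)
  then have "ennreal (F ((1 - c) / (18 * \<beta>))) \<le> ennreal 2" by (rule ennreal_leI)
  moreover have "(1 - c) / (18 * \<beta>) = (1 - c) * measure \<rho> {a. a \<le> c} / (18 * m)"
    using mean_pos by (simp add: \<beta>_def)
  ultimately show ?thesis by (simp add: fin)
qed

lemma mgf_finite_if_AE_le_1:
  assumes "AE a in \<rho>. a \<le> 1"
  obtains s where "0 < s" "mgf \<mu> s < \<infinity>"
proof -
  obtain c where c: "0 < c" "c < 1" "0 < measure \<rho> {a. a \<le> c}"
    using ex_mass_below_1[OF assms] .
  define T where "T = (1 - c) * measure \<rho> {a. a \<le> c} / (18 * m)"
  have "0 < T" using c mean_pos by (simp add: T_def)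
  have "mgf \<nu> T \<le> 2"
    unfolding nu.mgf_eq_SUP_mgf_trunc T_def
    using mgf_trunc_size_biased_le_2[OF assms c] by (intro SUP_least) simp
  then have "mgf \<mu> T \<le> ennreal (exp T) + ennreal m * 2"
    using mgf_le_exp_plus_mgf_size_biased[of T] \<open>0 < T\<close>
    by (meson add_left_mono less_imp_le mult_left_mono order_trans zero_le)
  also have "\<dots> < \<infinity>" by (simp add: ennreal_mult_less_top)
  finally show ?thesis using that \<open>0 < T\<close> by blast
qed

lemma mgf_cut_le_exp:
  assumes "0 \<le> x" "0 \<le> M" "mixed_mgf x \<le> ennreal M"
  shows "mgf_cut \<mu> (real (Suc N)) x \<le> ennreal (exp (x * exp x * m * M))"
proof -
  define K where "K = real (Suc N)"
  define h where "h = x / K"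
  define b where "b = h * exp (h * K) * m * M"
  have "0 < K" by (simp add: K_def)
  then have hK: "h * K = x" by (simp add: h_def)
  have "0 \<le> h" using assms \<open>0 < K\<close> by (simp add: h_def)
  have "0 \<le> b" using \<open>0 \<le> h\<close> assms(2) mean_pos by (simp add: b_def)
  have "mgf_cut \<mu> K (real (Suc N) * h) \<le> ennreal (exp (real (Suc N) * b))"
  proof (rule ennreal_le_exp_of_geometric_growth[where f="\<lambda>n. mgf_cut \<mu> K (real n * h)"])
    show "mgf_cut \<mu> K (real 0 * h) \<le> 1" by (simp add: mgf_cut_0_le_1)
    show "0 \<le> b" by fact
    fix n assume "n < Suc N"
    define t where "t = real n * h"
    have "0 \<le> t" using \<open>0 \<le> h\<close> by (simp add: t_def)
    have "real n * h \<le> real (Suc N) * h" using \<open>n < Suc N\<close> \<open>0 \<le> h\<close> by (intro mult_right_mono) auto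
    then have "t \<le> x" using hK by (simp add: t_def K_def mult.commute)
    have "mixed_mgf t \<le> ennreal M" using mixed_mgf_mono[OF \<open>0 \<le> t\<close> \<open>t \<le> x\<close>] assms(3) by simp
    with mgf_cut_size_biased_le[of K t] have nu_le: "mgf_cut \<nu> K t \<le> ennreal M * mgf_cut \<mu> K t"
      by (meson mult_right_mono order_trans zero_le)
    have "mgf_cut \<mu> K (real (Suc n) * h) = mgf_cut \<mu> K (t + h)"
      by (simp add: t_def algebra_simps)
    also have "\<dots> \<le> mgf_cut \<mu> K t + ennreal (h * exp (h * K) * m) * mgf_cut \<nu> K t"
      using \<open>0 \<le> h\<close> \<open>0 < K\<close> by (intro mgf_cut_step) auto
    also have "\<dots> \<le> mgf_cut \<mu> K t + ennreal (h * exp (h * K) * m) * (ennreal M * mgf_cut \<mu> K t)"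
      using nu_le by (intro add_left_mono mult_left_mono) auto
    also have "\<dots> = mgf_cut \<mu> K (real n * h) * (1 + ennreal b)"
      using \<open>0 \<le> h\<close> assms(2) mean_pos
      by (simp add: t_def b_def ennreal_mult distrib_left mult_ac)
    finally show "mgf_cut \<mu> K (real (Suc n) * h) \<le> mgf_cut \<mu> K (real n * h) * (1 + ennreal b)" .
  qed
  also have "real (Suc N) * b = x * exp x * m * M"
    using hK by (simp add: b_def K_def mult_ac)
  finally show ?thesis using hK by (simp add: K_def mult.commute)
qed

lemma mgf_finite_bootstrap:
  assumes "AE a in \<rho>. a \<le> c" "mgf \<mu> s < \<infinity>" "0 \<le> x" "c * x < s"
  shows "mgf \<mu> x < \<infinity>"
proof -
  have "mixed_mgf x \<le> mgf \<nu> (c * x)" using assms by (intro mixed_mgf_le_mgf)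
  also have "\<dots> < \<infinity>" using assms by (intro mgf_size_biased_finite)
  finally obtain M where M: "mixed_mgf x = ennreal M" "0 \<le> M" by (cases "mixed_mgf x") auto
  have "mgf \<mu> x \<le> ennreal (exp (x * exp x * m * M))"
    unfolding mgf_eq_SUP_mgf_cut using assms M by (intro SUP_least mgf_cut_le_exp) auto
  then show ?thesis by (simp add: le_less_trans)
qed

lemma mgf_finite_if_esssup_less_1:
  assumes "esssup \<rho> ereal < 1"
  shows "mgf \<mu> s < \<infinity>"
proof -
  obtain c0 where c0: "esssup \<rho> ereal \<le> ereal c0" "c0 < 1"
    using ereal_dense2[OF assms] by (auto intro: less_imp_le)
  define c where "c = max c0 (1/2)"
  have c: "0 < c" "c < 1" using c0 by (auto simp: c_def)
  have "AE a in \<rho>. a \<le> c"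
    using AE_le_of_esssup_le[OF c0(1)] by eventually_elim (simp add: c_def)
  moreover from this have "AE a in \<rho>. a \<le> 1" by eventually_elim (use c in simp)
  then obtain s0 where s0: "0 < s0" "mgf \<mu> s0 < \<infinity>" by (rule mgf_finite_if_AE_le_1)
  \<comment> \<open>Each bootstrap step enlarges the range of finite exponential moments by the factor 1/c.\<close>
  have finite_below: "mgf \<mu> x < \<infinity>" if "0 \<le> x" "x < s0 / c^n" for n x
    using that
  proof (induction n arbitrary: x)
    case 0
    then show ?case using s0 mgf_mono[of x s0] by (simp add: le_less_trans)
  next
    case (Suc n)
    define w where "w = s0 / c^n"
    define s1 where "s1 = (c * x + w) / 2"
    have "c * x < w" using Suc.prems c by (simp add: w_def field_simps)
    then have "c * x < s1" "s1 < s0 / c^n" by (simp_all add: s1_def w_def[symmetric])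
    moreover have "0 \<le> s1" using Suc.prems c s0 by (simp add: s1_def w_def)
    ultimately have "mgf \<mu> s1 < \<infinity>" using Suc.IH by blast
    with \<open>AE a in \<rho>. a \<le> c\<close> show ?case
      using Suc.prems(1) \<open>c * x < s1\<close> by (rule mgf_finite_bootstrap)
  qed
  show ?thesis
  proof (cases "0 \<le> s")
    case True
    have "1 < 1 / c" using c by simp
    then obtain n where "s / s0 < (1 / c)^n" using real_arch_pow by blast
    then have "s < s0 / c^n" using s0 c by (simp add: field_simps)
    with True show ?thesis by (rule finite_below)
  next
    case False
    then have "mgf \<mu> s \<le> 1" by (intro mgf_le_1) simp
    then show ?thesis by (simp add: le_less_trans)
  qed
qed

theorem mgf_finite_iff_esssup_le_1: "(\<exists>s>0. mgf \<mu> s < \<infinity>) \<longleftrightarrow> esssup \<rho> ereal \<le> 1"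
proof
  assume "\<exists>s>0. mgf \<mu> s < \<infinity>"
  then show "esssup \<rho> ereal \<le> 1" using esssup_le_1_if_mgf_finite by blast
next
  assume "esssup \<rho> ereal \<le> 1"
  then obtain s where "0 < s" "mgf \<mu> s < \<infinity>"
    using AE_le_of_esssup_le[of \<rho> 1] mgf_finite_if_AE_le_1 by (metis one_ereal_def)
  then show "\<exists>s>0. mgf \<mu> s < \<infinity>" by blast
qed

end

theorem proposition1p4:
  fixes \<rho> \<mu> :: "real measure"
  assumes "prob_space \<rho>" and "sets \<rho> = sets borel"
    and "AE a in \<rho>. a > 0"
    and "solves_eq2 \<rho> \<mu>"
  shows "((\<exists>s>0. (\<integral>\<^sup>+ x. ennreal (exp (s * x)) \<partial>\<mu>) < \<infinity>)
           \<longleftrightarrow> esssup \<rho> (\<lambda>a. ereal a) \<le> 1)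
      \<and> (esssup \<rho> (\<lambda>a. ereal a) < 1 \<longrightarrow>
           (\<forall>s::real. (\<integral>\<^sup>+ x. ennreal (exp (s * x)) \<partial>\<mu>) < \<infinity>) \<and>
           (\<exists>F. F holomorphic_on UNIV \<and> (\<forall>t::real. F (complex_of_real t) = char \<mu> t)))"
proof -
  interpret eq2_solution \<rho> \<mu> using assms by (rule eq2_solutionI)
  have "esssup \<rho> ereal < 1 \<Longrightarrow> (\<forall>s. mgf \<mu> s < \<infinity>) \<and>
      (\<exists>F. F holomorphic_on UNIV \<and> (\<forall>t::real. F (complex_of_real t) = char \<mu> t))"
    using mgf_finite_if_esssup_less_1 char_entire_extension by blast
  then show ?thesis using mgf_finite_iff_esssup_le_1 unfolding mgf_def by blast
qed

end
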